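(* Let $\Delta\geq 3$ be an integer. If $T$ is a rooted $(\Delta-1)$-ary tree of order $n$, then $$\sum_{u\in V(T)}n^{\downarrow}(u)\geq \frac{\Delta-2}{(\Delta-1)^2}\,n\left(\log_{(\Delta-1)}\big((\Delta-2)n\big)-1\right).$$
   Context: A rooted tree is $(\Delta-1)$-ary if every vertex has at most $\Delta-1$ children. For a vertex $u$ of a rooted tree $T$, $n^{\downarrow}(u)$ denotes the number of vertices of $T$ that are equal to $u$ or are descendants of $u$. *)

theory Defs
  imports Complex_Main
begin

text \<open>Finite rooted (ordered) trees: a node is given by the list of its children.
  Each occurrence of a Node in the tree is one vertex.\<close>
datatype rtree = Node "rtree list"

text \<open>Number of vertices (order) of a rooted tree; for a vertex u,
  the order of the subtree rooted at u is n-down(u).\<close>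
fun order :: "rtree \<Rightarrow> nat" where
  "order (Node ts) = 1 + sum_list (map order ts)"

text \<open>Sum over all vertices u of n-down(u): the root contributes the order of
  the whole tree, the other vertices are the vertices of the child subtrees.\<close>
fun sum_ndown :: "rtree \<Rightarrow> nat" where
  "sum_ndown (Node ts) = order (Node ts) + sum_list (map sum_ndown ts)"

fun is_kary :: "nat \<Rightarrow> rtree \<Rightarrow> bool" where
  "is_kary k (Node ts) = (length ts \<le> k \<and> (\<forall>t\<in>set ts. is_kary k t))"

end

(* Write K = Delta - 1 and F(x) = (K - 1)/K^2 * x * (log K ((K - 1) x) - 1).  If the root has child subtrees of orders
   x_1, ..., x_m with m <= K and s = x_1 + ... + x_m, the induction step needs
   F(1 + s) <= 1 + s + F(x_1) + ... + F(x_m).  Up to a linear term, F(x) is a multiple of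
   x ln x, and convexity (ln y <= y - 1) gives x_1 ln x_1 + ... + x_m ln x_m >= s ln (s/K);
   the remaining increment (1 + s) ln (1 + s) - s ln s is at most 1 + s.  Since
   (K - 1)/K^2 <= 1/4 and ln K >= 1/2, the resulting error is absorbed by the term 1 + s. *)
theory Submission
  imports Defs
begin

lemma sum_list_mult_ln_ge:
  fixes K :: real and xs :: "real list"
  assumes K: "K > 0" and len: "length xs \<le> K" and pos: "\<forall>x\<in>set xs. x > 0"
  shows "sum_list xs * ln (sum_list xs / K) \<le> (\<Sum>x\<leftarrow>xs. x * ln x)"
proof (cases "xs = []")
  case True
  then show ?thesis by simp
next
  case False
  define s where "s = sum_list xs"
  obtain y where "y \<in> set xs"
    using False last_in_set by blast
  then have "s > 0"
    unfolding s_def using pos member_le_sum_list [of y xs] by fastforce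
  have term_le: "ln (s / K) * x - x * ln x \<le> s / K - x" if "x \<in> set xs" for x
  proof -
    have "x > 0" using pos that by blast
    have "ln (s / (K * x)) \<le> s / (K * x) - 1"
      using \<open>s > 0\<close> \<open>x > 0\<close> K by (intro ln_le_minus_one) simp
    then have "x * ln (s / (K * x)) \<le> x * (s / (K * x) - 1)"
      using \<open>x > 0\<close> by (intro mult_left_mono) auto
    moreover have "x * ln (s / (K * x)) = ln (s / K) * x - x * ln x"
      using \<open>s > 0\<close> \<open>x > 0\<close> K by (simp add: ln_div ln_mult algebra_simps)
    moreover have "x * (s / (K * x) - 1) = s / K - x"
      using \<open>x > 0\<close> by (simp add: field_simps)
    ultimately show ?thesis
      by linarith
  qed
  have "ln (s / K) * s - (\<Sum>x\<leftarrow>xs. x * ln x) = (\<Sum>x\<leftarrow>xs. ln (s / K) * x - x * ln x)"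
    by (simp only: sum_list_subtractf sum_list_const_mult map_ident s_def)
  also have "\<dots> \<le> (\<Sum>x\<leftarrow>xs. s / K - x)"
    using term_le by (rule sum_list_mono)
  also have "\<dots> = length xs * (s / K) - s"
    by (simp add: sum_list_subtractf sum_list_triv s_def)
  also have "\<dots> \<le> 0"
    using len K \<open>s > 0\<close> by (simp add: field_simps)
  finally show ?thesis
    unfolding s_def by (simp add: mult.commute)
qed

lemma mult_ln_increment_le:
  fixes s :: real
  assumes "s \<ge> 0"
  shows "(1 + s) * ln (1 + s) - s * ln s \<le> 1 + s"
proof (cases "s = 0")
  case True
  then show ?thesis by simp
next
  case False
  with assms have "s > 0" by simp
  have "ln (1 + 1 / s) = ln (1 + s) - ln s"
    using \<open>s > 0\<close> ln_div [of "1 + s" s] by (simp add: field_simps)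
  have "(1 + s) * ln (1 + s) - s * ln s = ln (1 + s) + s * (ln (1 + s) - ln s)"
    by (simp add: algebra_simps)
  also have "\<dots> = ln (1 + s) + s * ln (1 + 1 / s)"
    using \<open>ln (1 + 1 / s) = ln (1 + s) - ln s\<close> by simp
  also have "\<dots> \<le> s + s * (1 / s)"
    using \<open>s > 0\<close> by (intro add_mono mult_left_mono ln_add_one_self_le_self) auto
  finally show ?thesis
    using \<open>s > 0\<close> by simp
qed

lemma sum_list_mult_ln_increment_le:
  fixes K :: real and xs :: "real list"
  assumes "K > 0" "length xs \<le> K" "\<forall>x\<in>set xs. x > 0"
  shows "(1 + sum_list xs) * ln (1 + sum_list xs) - (\<Sum>x\<leftarrow>xs. x * ln x)
    \<le> 1 + sum_list xs + sum_list xs * ln K"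
proof -
  define s where "s = sum_list xs"
  have "s \<ge> 0"
    unfolding s_def using assms(3) by (intro sum_list_nonneg) auto
  have "(1 + s) * ln (1 + s) - (\<Sum>x\<leftarrow>xs. x * ln x) \<le> (1 + s) * ln (1 + s) - s * ln (s / K)"
    using sum_list_mult_ln_ge [OF assms] by (simp add: s_def)
  also have "\<dots> = (1 + s) * ln (1 + s) - s * ln s + s * ln K"
    using assms(1) \<open>s \<ge> 0\<close> by (cases "s = 0") (simp_all add: ln_div algebra_simps)
  also have "\<dots> \<le> 1 + s + s * ln K"
    using mult_ln_increment_le [OF \<open>s \<ge> 0\<close>] by simp
  finally show ?thesis
    unfolding s_def .
qed

lemma ndown_bound_coeff_le:
  fixes K :: real
  assumes "K \<ge> 2"
  shows "(K - 1) / K^2 \<le> 1 / 4" "(K - 1) / K^2 / ln K \<le> 1 / 2"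
proof -
  show coeff: "(K - 1) / K^2 \<le> 1 / 4"
    using assms zero_le_power2 [of "K - 2"] by (simp add: field_simps power2_eq_square)
  have "ln K \<ge> 1 - 1 / K"
    using ln_le_minus_one [of "1 / K"] assms by (simp add: ln_div)
  moreover have "1 / K \<le> 1 / 2"
    using assms by simp
  ultimately have "ln K \<ge> 1 / 2"
    by linarith
  then have "(K - 1) / K^2 / ln K \<le> (1 / 4) / (1 / 2)"
    using coeff by (intro frac_le [of "1 / 4"]) auto
  then show "(K - 1) / K^2 / ln K \<le> 1 / 2"
    by simp
qed

definition ndown_bound :: "real \<Rightarrow> real \<Rightarrow> real" where
  "ndown_bound K x = (K - 1) / K^2 * x * (log K ((K - 1) * x) - 1)"

lemma ndown_bound_eq:
  assumes "K > 1" "x > 0"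
  shows "ndown_bound K x = (K - 1) / K^2 / ln K * (x * ln x) - (K - 1) / K^2 * (1 - log K (K - 1)) * x"
proof -
  have "ln K > 0"
    using assms by simp
  have log_eq: "log K ((K - 1) * x) = log K (K - 1) + ln x / ln K"
    using assms by (simp add: log_def ln_mult add_divide_distrib)
  show ?thesis
    unfolding ndown_bound_def log_eq using assms \<open>ln K > 0\<close> by (simp add: field_simps)
qed

lemma ndown_bound_Node_le:
  fixes K :: real and xs :: "real list"
  assumes K: "K \<ge> 2" and len: "length xs \<le> K" and pos: "\<forall>x\<in>set xs. x > 0"
  shows "ndown_bound K (1 + sum_list xs) \<le> 1 + sum_list xs + (\<Sum>x\<leftarrow>xs. ndown_bound K x)"
proof -
  define s where "s = sum_list xs"
  define c where "c = (K - 1) / K^2"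
  define e where "e = 1 - log K (K - 1)"
  define S where "S = (\<Sum>x\<leftarrow>xs. x * ln x)"
  have "s \<ge> 0"
    unfolding s_def using pos by (intro sum_list_nonneg) auto
  have "c \<ge> 0" "e \<ge> 0"
    using K by (simp_all add: c_def e_def)
  have "c \<le> 1 / 4" "c / ln K \<le> 1 / 2"
    using ndown_bound_coeff_le [OF K] by (simp_all add: c_def)
  have "ln K > 0"
    using K by simp
  have sum_eq: "(\<Sum>x\<leftarrow>xs. ndown_bound K x) = c / ln K * S - c * e * s"
  proof -
    have "ndown_bound K x = c / ln K * (x * ln x) - c * e * x" if "x \<in> set xs" for x
      unfolding c_def e_def using K pos that by (intro ndown_bound_eq) auto
    then have "(\<Sum>x\<leftarrow>xs. ndown_bound K x) = (\<Sum>x\<leftarrow>xs. c / ln K * (x * ln x) - c * e * x)"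
      by (intro arg_cong [where f = sum_list] map_cong) auto
    then show ?thesis
      by (simp only: sum_list_subtractf sum_list_const_mult map_ident S_def s_def)
  qed
  have root_eq: "ndown_bound K (1 + s) = c / ln K * ((1 + s) * ln (1 + s)) - c * e * (1 + s)"
    unfolding c_def e_def using K \<open>s \<ge> 0\<close> by (intro ndown_bound_eq) auto
  have gap: "(1 + s) * ln (1 + s) - S \<le> 1 + s + s * ln K"
    using sum_list_mult_ln_increment_le [OF _ len pos] K by (simp add: S_def s_def)
  have "ndown_bound K (1 + s) - (\<Sum>x\<leftarrow>xs. ndown_bound K x)
      = c / ln K * ((1 + s) * ln (1 + s) - S) - c * e"
    unfolding root_eq sum_eq by (simp add: algebra_simps)
  also have "\<dots> \<le> c / ln K * (1 + s + s * ln K)"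
    using mult_left_mono [OF gap, of "c / ln K"] mult_nonneg_nonneg [OF \<open>c \<ge> 0\<close> \<open>e \<ge> 0\<close>]
      \<open>c \<ge> 0\<close> \<open>ln K > 0\<close> by simp
  also have "\<dots> = c / ln K * (1 + s) + c * s"
    using \<open>ln K > 0\<close> by (simp add: field_simps)
  also have "\<dots> \<le> 1 / 2 * (1 + s) + 1 / 4 * s"
    using \<open>c / ln K \<le> 1 / 2\<close> \<open>c \<le> 1 / 4\<close> \<open>s \<ge> 0\<close> by (intro add_mono mult_right_mono) auto
  also have "\<dots> \<le> 1 + s"
    using \<open>s \<ge> 0\<close> by (simp add: field_simps)
  finally show ?thesis
    unfolding s_def by simp
qed

lemma ndown_bound_le_sum_ndown:
  assumes "k \<ge> 2" "is_kary k T"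
  shows "ndown_bound (real k) (real (order T)) \<le> real (sum_ndown T)"
  using assms(2)
proof (induction T)
  case (Node ts)
  define xs where "xs = map (\<lambda>t. real (order t)) ts"
  have "order t > 0" for t
    by (cases t) simp
  then have "length xs \<le> real k" "\<forall>x\<in>set xs. x > 0"
    using Node.prems by (auto simp: xs_def)
  note step = ndown_bound_Node_le [OF _ this]
  have IH: "(\<Sum>x\<leftarrow>xs. ndown_bound k x) \<le> (\<Sum>t\<leftarrow>ts. real (sum_ndown t))"
    using Node by (simp add: xs_def sum_list_mono)
  have "real (order (Node ts)) = 1 + sum_list xs"
    by (simp add: xs_def sum_list_of_nat [symmetric] comp_def)
  moreover have "real (sum_ndown (Node ts)) = 1 + sum_list xs + (\<Sum>t\<leftarrow>ts. real (sum_ndown t))"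
    by (simp add: xs_def sum_list_of_nat [symmetric] comp_def)
  ultimately show ?case
    using step assms(1) IH by simp
qed

theorem lemma3:
  fixes \<Delta> n :: nat and T :: rtree
  assumes "\<Delta> \<ge> 3"
    and "is_kary (\<Delta> - 1) T"
    and "order T = n"
  shows "real (sum_ndown T) \<ge>
    (real \<Delta> - 2) / (real \<Delta> - 1)^2 * real n *
      (log (real \<Delta> - 1) ((real \<Delta> - 2) * real n) - 1)"
proof -
  have "ndown_bound (real (\<Delta> - 1)) (real n) \<le> real (sum_ndown T)"
    using ndown_bound_le_sum_ndown [of "\<Delta> - 1" T] assms by simp
  moreover have "real (\<Delta> - 1) = real \<Delta> - 1"
    using assms(1) by simp
  ultimately show ?thesis
    by (simp add: ndown_bound_def algebra_simps)
qed

end
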